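(* Let $Q$ be a quantale, $M$ a $Q$-module and $\mathcal{F},\mathcal{G}\in\operatorname{mF}(Q)$. If both $\mathcal{F}$ and $\mathcal{F}+\mathcal{G}$ are localizable over $M$, then $\mathcal{G}$ is localizable over the $Q$-module $M_\mathcal{F}$, and the map $M_{\mathcal{F}+\mathcal{G}}\to (M_\mathcal{F})_\mathcal{G}$, $\overline{x}\mapsto\overline{\overline{x}}$, is a well-defined isomorphism of $Q$-modules.
   Context: A quantale is a poset $Q$ in which every nonempty subset $S$ has a join $\sum S$ (binary joins written $a+b$; no bottom element is required), with a top element $1$ and a commutative, associative multiplication with unit $1$ satisfying $a\cdot\sum_{i\in I}b_i=\sum_{i\in I}ab_i$ for every nonempty $I$. A $Q$-module is a poset $M$ with all nonempty joins and an action $Q\times M\to M$ which is associative, has $1$ acting as the identity, and distributes over nonempty joins in each variable. A Q-premodule is the same except $M$ is only required to have binary joins and distributivity over finite nonempty joins. A multiplicative filter (m-filter) of $Q$ is a subset $\mathcal{F}\subseteq Q$ with $1\in\mathcal{F}$, upward closed and closed under multiplication; $\operatorname{mF}(Q)$ is the set of m-filters; $\mathcal{F}+\mathcal{G}$ is the smallest m-filter containing $\mathcal{F}\cup\mathcal{G}$. Localization: for $a,b\in M$ write $a\preceq^1_\mathcal{F} b$ if there are families $(a_i)_{i\in I}$ in $M$ and $(s_i)_{i\in I}$ in $\mathcal{F}$ with $a\le\sum_i a_i$ and $s_ia_i\le b$ for all $i$; for $n\ge1$, $a\preceq^n_\mathcal{F} b$ means there are $c_1,\dots,c_{n-1}\in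 M$ with $a\preceq^1_\mathcal{F}c_1\preceq^1_\mathcal{F}\cdots\preceq^1_\mathcal{F}c_{n-1}\preceq^1_\mathcal{F}b$; $a\preceq_\mathcal{F}b$ means $a\preceq^n_\mathcal{F}b$ for some $n$. This is a preorder; $M_\mathcal{F}$ is the quotient by $a\sim b\iff a\preceq_\mathcal{F}b\preceq_\mathcal{F}a$, with class $\overline a$ and order $\overline a\le\overline b\iff a\preceq_\mathcal{F}b$; it is a $Q$-premodule with $\overline a+\overline b=\overline{a+b}$, $q\overline a=\overline{qa}$. $\mathcal{F}$ is localizable over $M$ if for each $b\in M$ there is $n_b\in\mathbb{N}$ such that $a\preceq_\mathcal{F}b$ implies $a\preceq^{n_b}_\mathcal{F}b$ for all $a\in M$; then $M_\mathcal{F}$ is a $Q$-module with $\sum_i\overline{a_i}=\overline{\sum_ia_i}$ and $q\overline a=\overline{qa}$. *)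

theory Defs
  imports Main
begin

definition poset_on :: "'a set \<Rightarrow> ('a \<Rightarrow> 'a \<Rightarrow> bool) \<Rightarrow> bool" where
  "poset_on A le \<longleftrightarrow>
     (\<forall>x\<in>A. le x x) \<and>
     (\<forall>x\<in>A. \<forall>y\<in>A. le x y \<and> le y x \<longrightarrow> x = y) \<and>
     (\<forall>x\<in>A. \<forall>y\<in>A. \<forall>z\<in>A. le x y \<and> le y z \<longrightarrow> le x z)"

definition is_lub :: "'a set \<Rightarrow> ('a \<Rightarrow> 'a \<Rightarrow> bool) \<Rightarrow> 'a set \<Rightarrow> 'a \<Rightarrow> bool" where
  "is_lub A le S x \<longleftrightarrow>
     x \<in> A \<and> (\<forall>s\<in>S. le s x) \<and> (\<forall>y\<in>A. (\<forall>s\<in>S. le s y) \<longrightarrow> le x y)"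

record 'q quantale_str =
  qcar :: "'q set"
  qle  :: "'q \<Rightarrow> 'q \<Rightarrow> bool"
  qmul :: "'q \<Rightarrow> 'q \<Rightarrow> 'q"
  qone :: 'q

record ('q, 'm) qmod =
  mcar :: "'m set"
  mle  :: "'m \<Rightarrow> 'm \<Rightarrow> bool"
  mact :: "'q \<Rightarrow> 'm \<Rightarrow> 'm"

definition quantale :: "'q quantale_str \<Rightarrow> bool" where
  "quantale Q \<longleftrightarrow>
     poset_on (qcar Q) (qle Q) \<and>
     (\<forall>S. S \<subseteq> qcar Q \<and> S \<noteq> {} \<longrightarrow> (\<exists>x. is_lub (qcar Q) (qle Q) S x)) \<and>
     qone Q \<in> qcar Q \<and> (\<forall>a\<in>qcar Q. qle Q a (qone Q)) \<and>
     (\<forall>a\<in>qcar Q. \<forall>b\<in>qcar Q. qmul Q a b \<in> qcar Q) \<and>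
     (\<forall>a\<in>qcar Q. \<forall>b\<in>qcar Q. qmul Q a b = qmul Q b a) \<and>
     (\<forall>a\<in>qcar Q. \<forall>b\<in>qcar Q. \<forall>c\<in>qcar Q. qmul Q (qmul Q a b) c = qmul Q a (qmul Q b c)) \<and>
     (\<forall>a\<in>qcar Q. qmul Q (qone Q) a = a) \<and>
     (\<forall>a\<in>qcar Q. \<forall>S x. S \<subseteq> qcar Q \<and> S \<noteq> {} \<and> is_lub (qcar Q) (qle Q) S x \<longrightarrow>
        is_lub (qcar Q) (qle Q) (qmul Q a ` S) (qmul Q a x))"

definition qmodule :: "'q quantale_str \<Rightarrow> ('q, 'm) qmod \<Rightarrow> bool" where
  "qmodule Q M \<longleftrightarrow>
     poset_on (mcar M) (mle M) \<and>
     (\<forall>S. S \<subseteq> mcar M \<and> S \<noteq> {} \<longrightarrow> (\<exists>x. is_lub (mcar M) (mle M) S x)) \<and>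
     (\<forall>q\<in>qcar Q. \<forall>x\<in>mcar M. mact M q x \<in> mcar M) \<and>
     (\<forall>p\<in>qcar Q. \<forall>q\<in>qcar Q. \<forall>x\<in>mcar M. mact M (qmul Q p q) x = mact M p (mact M q x)) \<and>
     (\<forall>x\<in>mcar M. mact M (qone Q) x = x) \<and>
     (\<forall>q\<in>qcar Q. \<forall>S x. S \<subseteq> mcar M \<and> S \<noteq> {} \<and> is_lub (mcar M) (mle M) S x \<longrightarrow>
        is_lub (mcar M) (mle M) (mact M q ` S) (mact M q x)) \<and>
     (\<forall>x\<in>mcar M. \<forall>S p. S \<subseteq> qcar Q \<and> S \<noteq> {} \<and> is_lub (qcar Q) (qle Q) S p \<longrightarrow>
        is_lub (mcar M) (mle M) ((\<lambda>q. mact M q x) ` S) (mact M p x))"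

definition module_hom :: "'q quantale_str \<Rightarrow> ('q, 'm) qmod \<Rightarrow> ('q, 'n) qmod \<Rightarrow> ('m \<Rightarrow> 'n) \<Rightarrow> bool" where
  "module_hom Q M N f \<longleftrightarrow>
     f ` mcar M \<subseteq> mcar N \<and>
     (\<forall>S x. S \<subseteq> mcar M \<and> S \<noteq> {} \<and> is_lub (mcar M) (mle M) S x \<longrightarrow>
        is_lub (mcar N) (mle N) (f ` S) (f x)) \<and>
     (\<forall>q\<in>qcar Q. \<forall>x\<in>mcar M. f (mact M q x) = mact N q (f x))"

definition module_iso :: "'q quantale_str \<Rightarrow> ('q, 'm) qmod \<Rightarrow> ('q, 'n) qmod \<Rightarrow> ('m \<Rightarrow> 'n) \<Rightarrow> bool" where
  "module_iso Q M N f \<longleftrightarrow>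
     bij_betw f (mcar M) (mcar N) \<and> module_hom Q M N f \<and>
     module_hom Q N M (inv_into (mcar M) f)"

definition mfilter :: "'q quantale_str \<Rightarrow> 'q set \<Rightarrow> bool" where
  "mfilter Q F \<longleftrightarrow>
     F \<subseteq> qcar Q \<and> qone Q \<in> F \<and>
     (\<forall>a\<in>F. \<forall>b\<in>qcar Q. qle Q a b \<longrightarrow> b \<in> F) \<and>
     (\<forall>a\<in>F. \<forall>b\<in>F. qmul Q a b \<in> F)"

definition mF :: "'q quantale_str \<Rightarrow> 'q set set" where
  "mF Q = {F. mfilter Q F}"

definition mfilter_sum :: "'q quantale_str \<Rightarrow> 'q set \<Rightarrow> 'q set \<Rightarrow> 'q set" where
  "mfilter_sum Q F G = \<Inter> {H. mfilter Q H \<and> F \<union> G \<subseteq> H}"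

definition prec1 :: "('q, 'm) qmod \<Rightarrow> 'q set \<Rightarrow> 'm \<Rightarrow> 'm \<Rightarrow> bool" where
  "prec1 M F a b \<longleftrightarrow> a \<in> mcar M \<and> b \<in> mcar M \<and>
     (\<exists>P. P \<subseteq> mcar M \<times> F \<and> P \<noteq> {} \<and>
        (\<exists>j. is_lub (mcar M) (mle M) (fst ` P) j \<and> mle M a j) \<and>
        (\<forall>(c, s)\<in>P. mle M (mact M s c) b))"

text \<open>precn n: a chain of n one-step relations (n = 0 is equality, only used for n \<ge> 1).\<close>
fun precn :: "('q, 'm) qmod \<Rightarrow> 'q set \<Rightarrow> nat \<Rightarrow> 'm \<Rightarrow> 'm \<Rightarrow> bool" where
  "precn M F 0 a b \<longleftrightarrow> a = b \<and> a \<in> mcar M"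
| "precn M F (Suc n) a b \<longleftrightarrow> (\<exists>c. precn M F n a c \<and> prec1 M F c b)"

definition prec :: "('q, 'm) qmod \<Rightarrow> 'q set \<Rightarrow> 'm \<Rightarrow> 'm \<Rightarrow> bool" where
  "prec M F a b \<longleftrightarrow> (\<exists>n\<ge>1. precn M F n a b)"

definition localizable :: "('q, 'm) qmod \<Rightarrow> 'q set \<Rightarrow> bool" where
  "localizable M F \<longleftrightarrow>
     (\<forall>b\<in>mcar M. \<exists>n\<ge>1. \<forall>a\<in>mcar M. prec M F a b \<longrightarrow> precn M F n a b)"

definition cls :: "('q, 'm) qmod \<Rightarrow> 'q set \<Rightarrow> 'm \<Rightarrow> 'm set" where
  "cls M F a = {b \<in> mcar M. prec M F a b \<and> prec M F b a}"

definition loc :: "('q, 'm) qmod \<Rightarrow> 'q set \<Rightarrow> ('q, 'm set) qmod" where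
  "loc M F = \<lparr> mcar = cls M F ` mcar M,
     mle = (\<lambda>X Y. \<exists>a\<in>mcar M. \<exists>b\<in>mcar M. X = cls M F a \<and> Y = cls M F b \<and> prec M F a b),
     mact = (\<lambda>q X. cls M F (mact M q (SOME a. a \<in> X))) \<rparr>"

end

theory Submission
  imports Defs
begin

text \<open>Write H = F + G. Every element of H lies above a product f g with f in F and g in G, so
  a one-step H-witness (c_i, s_i) for x below y gives the one-step G-witness ([g_i c_i], g_i) for
  [x] below [y] in M_F, because f_i (g_i c_i) <= s_i c_i <= y. Conversely, a one-step G-witness
  in M_F lifts to representatives; since F is localizable, joins in M_F are classes of joins in M,
  which turns the lifted witness into an F-H-F chain. Hence x <=_H y iff [x] <=_G [y] in M_F,
  with chain lengths preserved from M to M_F. This transfers localizability of H over M to G over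
  M_F and makes [x]_H |-> [[x]_F]_G a well-defined order isomorphism commuting with the action.\<close>

lemma is_lub_in: "is_lub A le S x \<Longrightarrow> x \<in> A"
  and is_lub_upper: "is_lub A le S x \<Longrightarrow> s \<in> S \<Longrightarrow> le s x"
  and is_lub_least: "is_lub A le S x \<Longrightarrow> y \<in> A \<Longrightarrow> (\<And>s. s \<in> S \<Longrightarrow> le s y) \<Longrightarrow> le x y"
  unfolding is_lub_def by blast+

lemma is_lub_unique: "poset_on A le \<Longrightarrow> is_lub A le S x \<Longrightarrow> is_lub A le S y \<Longrightarrow> x = y"
  unfolding poset_on_def is_lub_def by blast

lemma is_lub_subset_le: "is_lub A le S x \<Longrightarrow> is_lub A le T y \<Longrightarrow> S \<subseteq> T \<Longrightarrow> le x y"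
  unfolding is_lub_def by blast

lemma is_lub_singleton: "poset_on A le \<Longrightarrow> x \<in> A \<Longrightarrow> is_lub A le {x} x"
  unfolding poset_on_def is_lub_def by blast

lemma is_lub_pair: "poset_on A le \<Longrightarrow> a \<in> A \<Longrightarrow> b \<in> A \<Longrightarrow> le a b \<Longrightarrow> is_lub A le {a, b} b"
  unfolding poset_on_def is_lub_def by blast

lemma order_iso_is_lub:
  assumes bij: "bij_betw f A B" and le_iff: "\<And>x y. x \<in> A \<Longrightarrow> y \<in> A \<Longrightarrow> leB (f x) (f y) \<longleftrightarrow> leA x y"
    and "S \<subseteq> A" and lub: "is_lub A leA S x"
  shows "is_lub B leB (f ` S) (f x)"
proof -
  have x: "x \<in> A" using lub by (rule is_lub_in)
  have "leB (f x) y" if y: "y \<in> B" and ub: "\<forall>t\<in>f ` S. leB t y" for y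
  proof -
    obtain y' where y': "y' \<in> A" "y = f y'" using y bij by (auto simp: bij_betw_def)
    have "leA x y'" using is_lub_least[OF lub y'(1)] ub y' le_iff \<open>S \<subseteq> A\<close> by blast
    then show ?thesis using le_iff x y' by blast
  qed
  moreover have "f x \<in> B" using bij x by (auto simp: bij_betw_def)
  ultimately show ?thesis
    using is_lub_upper[OF lub] le_iff x \<open>S \<subseteq> A\<close> unfolding is_lub_def by blast
qed

lemma order_iso_inv_le_iff:
  assumes bij: "bij_betw f A B" and le_iff: "\<And>x y. x \<in> A \<Longrightarrow> y \<in> A \<Longrightarrow> leB (f x) (f y) \<longleftrightarrow> leA x y"
    and "u \<in> B" "v \<in> B"
  shows "leA (inv_into A f u) (inv_into A f v) \<longleftrightarrow> leB u v"
  using assms le_iff[of "inv_into A f u" "inv_into A f v"]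
  by (simp add: bij_betw_def inv_into_into f_inv_into_f)

lemma module_hom_if_order_iso:
  assumes bij: "bij_betw f (mcar M) (mcar N)"
    and le_iff: "\<And>x y. x \<in> mcar M \<Longrightarrow> y \<in> mcar M \<Longrightarrow> mle N (f x) (f y) \<longleftrightarrow> mle M x y"
    and act: "\<And>q x. q \<in> qcar Q \<Longrightarrow> x \<in> mcar M \<Longrightarrow> f (mact M q x) = mact N q (f x)"
  shows "module_hom Q M N f"
  unfolding module_hom_def
  using order_iso_is_lub[where leA = "mle M" and leB = "mle N", OF bij le_iff] act bij
  by (auto simp: bij_betw_def)

lemma module_iso_if_order_iso:
  assumes bij: "bij_betw f (mcar M) (mcar N)"
    and le_iff: "\<And>x y. x \<in> mcar M \<Longrightarrow> y \<in> mcar M \<Longrightarrow> mle N (f x) (f y) \<longleftrightarrow> mle M x y"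
    and act_in: "\<And>q x. q \<in> qcar Q \<Longrightarrow> x \<in> mcar M \<Longrightarrow> mact M q x \<in> mcar M"
    and act: "\<And>q x. q \<in> qcar Q \<Longrightarrow> x \<in> mcar M \<Longrightarrow> f (mact M q x) = mact N q (f x)"
  shows "module_iso Q M N f"
proof -
  have inj: "inj_on f (mcar M)" and surj: "f ` mcar M = mcar N"
    using bij by (simp_all add: bij_betw_def)
  have "inv_into (mcar M) f (mact N q y) = mact M q (inv_into (mcar M) f y)"
    if q: "q \<in> qcar Q" and y: "y \<in> mcar N" for q y
  proof -
    obtain x where x: "x \<in> mcar M" "y = f x" using y surj by blast
    then show ?thesis using act[OF q x(1), symmetric] act_in[OF q x(1)] inv_into_f_f[OF inj] by simp
  qed
  then have "module_hom Q N M (inv_into (mcar M) f)"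
    using module_hom_if_order_iso[OF bij_betw_inv_into[OF bij]]
      order_iso_inv_le_iff[where leA = "mle M" and leB = "mle N", OF bij le_iff]
    by blast
  then show ?thesis
    unfolding module_iso_def using bij module_hom_if_order_iso[OF bij le_iff act] by blast
qed

lemma prec1I:
  assumes "a \<in> mcar M" "b \<in> mcar M" "P \<subseteq> mcar M \<times> F" "P \<noteq> {}"
    "is_lub (mcar M) (mle M) (fst ` P) j" "mle M a j" "\<And>c s. (c, s) \<in> P \<Longrightarrow> mle M (mact M s c) b"
  shows "prec1 M F a b"
  unfolding prec1_def using assms by blast

lemma prec1E:
  assumes "prec1 M F a b"
  obtains P j where "a \<in> mcar M" "b \<in> mcar M" "P \<subseteq> mcar M \<times> F" "P \<noteq> {}"
    "is_lub (mcar M) (mle M) (fst ` P) j" "mle M a j" "\<And>c s. (c, s) \<in> P \<Longrightarrow> mle M (mact M s c) b"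
  using assms unfolding prec1_def by blast

lemma prec1_filter_mono: "F \<subseteq> F' \<Longrightarrow> prec1 M F a b \<Longrightarrow> prec1 M F' a b"
  unfolding prec1_def by (meson Sigma_mono order_refl order_trans)

lemma precn_filter_mono: "F \<subseteq> F' \<Longrightarrow> precn M F n a b \<Longrightarrow> precn M F' n a b"
  by (induction n arbitrary: b) (auto dest: prec1_filter_mono)

lemma prec_filter_mono: "F \<subseteq> F' \<Longrightarrow> prec M F a b \<Longrightarrow> prec M F' a b"
  unfolding prec_def by (meson precn_filter_mono)

lemma prec1_in: "prec1 M F a b \<Longrightarrow> a \<in> mcar M \<and> b \<in> mcar M"
  unfolding prec1_def by blast

lemma precn_Suc_0: "precn M F (Suc 0) a b \<longleftrightarrow> prec1 M F a b"
  by (auto dest: prec1_in)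

lemma precn_trans: "precn M F n a b \<Longrightarrow> precn M F m b c \<Longrightarrow> precn M F (n + m) a c"
  by (induction m arbitrary: c) auto

lemma prec_trans: "prec M F a b \<Longrightarrow> prec M F b c \<Longrightarrow> prec M F a c"
  unfolding prec_def by (metis precn_trans le_add1 order_trans)

lemma prec1_imp_prec: "prec1 M F a b \<Longrightarrow> prec M F a b"
  unfolding prec_def using precn_Suc_0[of M F a b] by (metis One_nat_def order_refl)

definition mfilter_prod :: "'q quantale_str \<Rightarrow> 'q set \<Rightarrow> 'q set \<Rightarrow> 'q set" where
  "mfilter_prod Q F G = {t \<in> qcar Q. \<exists>f\<in>F. \<exists>g\<in>G. qle Q (qmul Q f g) t}"

lemma Un_subset_mfilter_sum: "F \<union> G \<subseteq> mfilter_sum Q F G"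
  unfolding mfilter_sum_def by blast

locale quantale_structure =
  fixes Q :: "'q quantale_str"
  assumes quantale: "quantale Q"
begin

lemma qposet: "poset_on (qcar Q) (qle Q)"
  using quantale unfolding quantale_def by (elim conjE)

lemma qone_in: "qone Q \<in> qcar Q"
  using quantale unfolding quantale_def by (elim conjE)

lemma qmul_in: "a \<in> qcar Q \<Longrightarrow> b \<in> qcar Q \<Longrightarrow> qmul Q a b \<in> qcar Q"
  using quantale unfolding quantale_def by (elim conjE) simp

lemma qmul_comm: "a \<in> qcar Q \<Longrightarrow> b \<in> qcar Q \<Longrightarrow> qmul Q a b = qmul Q b a"
  using quantale unfolding quantale_def by (elim conjE) simp

lemma qmul_assoc:
  "a \<in> qcar Q \<Longrightarrow> b \<in> qcar Q \<Longrightarrow> c \<in> qcar Q \<Longrightarrow> qmul Q (qmul Q a b) c = qmul Q a (qmul Q b c)"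
  using quantale unfolding quantale_def by (elim conjE) simp

lemma qmul_one: "a \<in> qcar Q \<Longrightarrow> qmul Q (qone Q) a = a"
  using quantale unfolding quantale_def by (elim conjE) simp

lemma qmul_is_lub: "a \<in> qcar Q \<Longrightarrow> S \<subseteq> qcar Q \<Longrightarrow> S \<noteq> {} \<Longrightarrow> is_lub (qcar Q) (qle Q) S x \<Longrightarrow>
    is_lub (qcar Q) (qle Q) (qmul Q a ` S) (qmul Q a x)"
  using quantale unfolding quantale_def by (elim conjE) simp

lemma qle_refl: "a \<in> qcar Q \<Longrightarrow> qle Q a a"
  and qle_trans: "a \<in> qcar Q \<Longrightarrow> b \<in> qcar Q \<Longrightarrow> c \<in> qcar Q \<Longrightarrow> qle Q a b \<Longrightarrow> qle Q b c \<Longrightarrow> qle Q a c"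
  using qposet unfolding poset_on_def by blast+

lemma qmul_mono:
  "c \<in> qcar Q \<Longrightarrow> a \<in> qcar Q \<Longrightarrow> b \<in> qcar Q \<Longrightarrow> qle Q a b \<Longrightarrow> qle Q (qmul Q c a) (qmul Q c b)"
  using qmul_is_lub[of c "{a, b}" b] is_lub_pair[OF qposet] is_lub_upper by fastforce

lemma mfilter_prod_mfilter:
  assumes F: "mfilter Q F" and G: "mfilter Q G"
  shows "mfilter Q (mfilter_prod Q F G)"
  unfolding mfilter_def
proof (intro conjI ballI impI)
  have FQ: "F \<subseteq> qcar Q" and GQ: "G \<subseteq> qcar Q" using F G by (simp_all add: mfilter_def)
  show "mfilter_prod Q F G \<subseteq> qcar Q" by (auto simp: mfilter_prod_def)
  have "qle Q (qmul Q (qone Q) (qone Q)) (qone Q)"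
    using qmul_one[OF qone_in] qle_refl[OF qone_in] by simp
  then show "qone Q \<in> mfilter_prod Q F G"
    using F G qone_in unfolding mfilter_def mfilter_prod_def by blast
  show "b \<in> mfilter_prod Q F G" if "a \<in> mfilter_prod Q F G" "b \<in> qcar Q" "qle Q a b" for a b
    using that FQ GQ qmul_in qle_trans[of _ a b] unfolding mfilter_prod_def by blast
  show "qmul Q a b \<in> mfilter_prod Q F G"
    if a: "a \<in> mfilter_prod Q F G" and b: "b \<in> mfilter_prod Q F G" for a b
  proof -
    obtain f g f' g' where fg: "f \<in> F" "g \<in> G" "qle Q (qmul Q f g) a"
      and fg': "f' \<in> F" "g' \<in> G" "qle Q (qmul Q f' g') b" and ab: "a \<in> qcar Q" "b \<in> qcar Q"
      using a b unfolding mfilter_prod_def by blast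
    have Q: "f \<in> qcar Q" "g \<in> qcar Q" "f' \<in> qcar Q" "g' \<in> qcar Q" using fg fg' FQ GQ by auto
    have x: "qmul Q f g \<in> qcar Q" and y: "qmul Q f' g' \<in> qcar Q" using Q qmul_in by auto
    have "qmul Q (qmul Q f f') (qmul Q g g') = qmul Q f (qmul Q (qmul Q f' g) g')"
      using Q qmul_assoc qmul_in by simp
    also have "\<dots> = qmul Q (qmul Q f g) (qmul Q f' g')"
      using Q qmul_assoc qmul_in qmul_comm[of f' g] by simp
    also have "qle Q \<dots> (qmul Q a (qmul Q f' g'))"
      using qmul_mono[OF y x ab(1) fg(3)] qmul_comm[OF y] x ab(1) by simp
    finally have "qle Q (qmul Q (qmul Q f f') (qmul Q g g')) (qmul Q a (qmul Q f' g'))" .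
    then have "qle Q (qmul Q (qmul Q f f') (qmul Q g g')) (qmul Q a b)"
      using qle_trans[OF _ _ _ _ qmul_mono[OF ab(1) y ab(2) fg'(3)]] Q ab y qmul_in by simp
    moreover have "qmul Q f f' \<in> F" "qmul Q g g' \<in> G"
      using F G fg fg' by (simp_all add: mfilter_def)
    ultimately show ?thesis using ab qmul_in unfolding mfilter_prod_def by blast
  qed
qed

lemma mfilter_sum_eq_prod:
  assumes F: "mfilter Q F" and G: "mfilter Q G"
  shows "mfilter_sum Q F G = mfilter_prod Q F G"
proof
  have FQ: "F \<subseteq> qcar Q" and GQ: "G \<subseteq> qcar Q" and one: "qone Q \<in> F" "qone Q \<in> G"
    using F G by (simp_all add: mfilter_def)
  have "f \<in> mfilter_prod Q F G" if "f \<in> F" for f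
  proof -
    have f: "f \<in> qcar Q" using that FQ by blast
    have "qle Q (qmul Q f (qone Q)) f"
      using qle_refl[OF f] qmul_comm[OF f qone_in] qmul_one[OF f] by simp
    then show ?thesis using that f one unfolding mfilter_prod_def by blast
  qed
  moreover have "g \<in> mfilter_prod Q F G" if "g \<in> G" for g
  proof -
    have g: "g \<in> qcar Q" using that GQ by blast
    have "qle Q (qmul Q (qone Q) g) g" using qle_refl[OF g] qmul_one[OF g] by simp
    then show ?thesis using that g one unfolding mfilter_prod_def by blast
  qed
  ultimately have "F \<union> G \<subseteq> mfilter_prod Q F G" by blast
  then show "mfilter_sum Q F G \<subseteq> mfilter_prod Q F G"
    using mfilter_prod_mfilter[OF F G] unfolding mfilter_sum_def by blast
next
  show "mfilter_prod Q F G \<subseteq> mfilter_sum Q F G"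
  proof
    fix t assume "t \<in> mfilter_prod Q F G"
    then obtain f g where fg: "f \<in> F" "g \<in> G" "qle Q (qmul Q f g) t" "t \<in> qcar Q"
      by (auto simp: mfilter_prod_def)
    show "t \<in> mfilter_sum Q F G" unfolding mfilter_sum_def
    proof
      fix H assume "H \<in> {H. mfilter Q H \<and> F \<union> G \<subseteq> H}"
      then have H: "mfilter Q H" and "f \<in> H" "g \<in> H" using fg by auto
      then have "qmul Q f g \<in> H" by (simp add: mfilter_def)
      then show "t \<in> H" using H fg unfolding mfilter_def by blast
    qed
  qed
qed

end

locale module_with_filter = quantale_structure +
  fixes M :: "('q, 'm) qmod" and F :: "'q set"
  assumes module: "qmodule Q M" and filter: "mfilter Q F"
begin

lemma mposet: "poset_on (mcar M) (mle M)"
  using module unfolding qmodule_def by (elim conjE)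

lemma lub_exists: "S \<subseteq> mcar M \<Longrightarrow> S \<noteq> {} \<Longrightarrow> \<exists>x. is_lub (mcar M) (mle M) S x"
  using module unfolding qmodule_def by (elim conjE) blast

lemma act_in: "q \<in> qcar Q \<Longrightarrow> x \<in> mcar M \<Longrightarrow> mact M q x \<in> mcar M"
  using module unfolding qmodule_def by (elim conjE) simp

lemma act_mul:
  "p \<in> qcar Q \<Longrightarrow> q \<in> qcar Q \<Longrightarrow> x \<in> mcar M \<Longrightarrow> mact M (qmul Q p q) x = mact M p (mact M q x)"
  using module unfolding qmodule_def by (elim conjE) simp

lemma act_one: "x \<in> mcar M \<Longrightarrow> mact M (qone Q) x = x"
  using module unfolding qmodule_def by (elim conjE) simp

lemma act_is_lub: "q \<in> qcar Q \<Longrightarrow> S \<subseteq> mcar M \<Longrightarrow> S \<noteq> {} \<Longrightarrow> is_lub (mcar M) (mle M) S x \<Longrightarrow>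
    is_lub (mcar M) (mle M) (mact M q ` S) (mact M q x)"
  using module unfolding qmodule_def by (elim conjE) simp

lemma act_is_lub_left: "x \<in> mcar M \<Longrightarrow> S \<subseteq> qcar Q \<Longrightarrow> S \<noteq> {} \<Longrightarrow> is_lub (qcar Q) (qle Q) S p \<Longrightarrow>
    is_lub (mcar M) (mle M) ((\<lambda>q. mact M q x) ` S) (mact M p x)"
  using module unfolding qmodule_def by (elim conjE) simp

lemma mle_refl: "x \<in> mcar M \<Longrightarrow> mle M x x"
  and mle_trans: "x \<in> mcar M \<Longrightarrow> y \<in> mcar M \<Longrightarrow> z \<in> mcar M \<Longrightarrow> mle M x y \<Longrightarrow> mle M y z \<Longrightarrow> mle M x z"
  using mposet unfolding poset_on_def by blast+

lemma act_mono:
  "q \<in> qcar Q \<Longrightarrow> a \<in> mcar M \<Longrightarrow> b \<in> mcar M \<Longrightarrow> mle M a b \<Longrightarrow> mle M (mact M q a) (mact M q b)"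
  using act_is_lub[of q "{a, b}" b] is_lub_pair[OF mposet] is_lub_upper by fastforce

lemma act_mono_left:
  "x \<in> mcar M \<Longrightarrow> p \<in> qcar Q \<Longrightarrow> q \<in> qcar Q \<Longrightarrow> qle Q p q \<Longrightarrow> mle M (mact M p x) (mact M q x)"
  using act_is_lub_left[of x "{p, q}" q] is_lub_pair[OF qposet] is_lub_upper by fastforce

lemma filter_subset: "F \<subseteq> qcar Q"
  and one_in_filter: "qone Q \<in> F"
  using filter unfolding mfilter_def by blast+

lemma prec1_le: "a \<in> mcar M \<Longrightarrow> b \<in> mcar M \<Longrightarrow> mle M a b \<Longrightarrow> prec1 M F a b"
  by (rule prec1I[of a M b "{(a, qone Q)}" F a])
    (auto simp: one_in_filter act_one mle_refl is_lub_singleton[OF mposet])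

lemma prec_le: "a \<in> mcar M \<Longrightarrow> b \<in> mcar M \<Longrightarrow> mle M a b \<Longrightarrow> prec M F a b"
  by (simp add: prec1_imp_prec prec1_le)

lemma prec_refl: "a \<in> mcar M \<Longrightarrow> prec M F a a"
  by (simp add: prec_le mle_refl)

lemma prec1_mono_right:
  assumes "prec1 M F a b" "b' \<in> mcar M" "mle M b b'"
  shows "prec1 M F a b'"
  using assms(1)
proof (rule prec1E)
  fix P j
  assume "a \<in> mcar M" "b \<in> mcar M" "P \<subseteq> mcar M \<times> F" "P \<noteq> {}" "is_lub (mcar M) (mle M) (fst ` P) j"
    "mle M a j" and below: "\<And>c s. (c, s) \<in> P \<Longrightarrow> mle M (mact M s c) b"
  moreover have "mle M (mact M s c) b'" if "(c, s) \<in> P" for c s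
    using mle_trans[OF act_in _ assms(2) below[OF that] assms(3)] that filter_subset
      \<open>P \<subseteq> mcar M \<times> F\<close> \<open>b \<in> mcar M\<close> by blast
  ultimately show ?thesis using assms(2) by (intro prec1I[of a M b' P F j])
qed

lemma prec1_act:
  assumes q: "q \<in> qcar Q" and "prec1 M F a b"
  shows "prec1 M F (mact M q a) (mact M q b)"
  using assms(2)
proof (rule prec1E)
  fix P j
  assume a: "a \<in> mcar M" and b: "b \<in> mcar M" and P: "P \<subseteq> mcar M \<times> F" "P \<noteq> {}"
    and j: "is_lub (mcar M) (mle M) (fst ` P) j" and "mle M a j"
    and below: "\<And>c s. (c, s) \<in> P \<Longrightarrow> mle M (mact M s c) b"
  define P' where "P' = (\<lambda>(c, s). (mact M q c, s)) ` P"
  have "fst ` P' = mact M q ` fst ` P" unfolding P'_def by force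
  moreover have "fst ` P \<subseteq> mcar M" "fst ` P \<noteq> {}" using P by auto
  ultimately have "is_lub (mcar M) (mle M) (fst ` P') (mact M q j)"
    using act_is_lub[OF q _ _ j] by simp
  moreover have "mle M (mact M q a) (mact M q j)"
    using act_mono[OF q a is_lub_in[OF j] \<open>mle M a j\<close>] .
  moreover have "mle M (mact M s c') (mact M q b)" if cs': "(c', s) \<in> P'" for c' s
  proof -
    obtain c where cs: "(c, s) \<in> P" and c': "c' = mact M q c" using cs' unfolding P'_def by force
    have c: "c \<in> mcar M" and s: "s \<in> qcar Q" using cs P filter_subset by auto
    have "mact M s (mact M q c) = mact M q (mact M s c)"
      using act_mul[OF s q c] act_mul[OF q s c] qmul_comm[OF s q] by simp
    then show ?thesis using act_mono[OF q act_in[OF s c] b below[OF cs]] c' by simp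
  qed
  moreover have "P' \<subseteq> mcar M \<times> F" "P' \<noteq> {}" using P act_in[OF q] unfolding P'_def by auto
  ultimately show ?thesis using act_in[OF q a] act_in[OF q b] by (intro prec1I) auto
qed

lemma precn_act: "q \<in> qcar Q \<Longrightarrow> precn M F n a b \<Longrightarrow> precn M F n (mact M q a) (mact M q b)"
  by (induction n arbitrary: b) (auto intro: prec1_act act_in)

lemma prec_act: "q \<in> qcar Q \<Longrightarrow> prec M F a b \<Longrightarrow> prec M F (mact M q a) (mact M q b)"
  unfolding prec_def using precn_act by blast

lemma prec1_join:
  assumes A: "A \<subseteq> mcar M" "A \<noteq> {}" and j: "is_lub (mcar M) (mle M) A j" and b: "b \<in> mcar M"
    and prec1_b: "\<And>a. a \<in> A \<Longrightarrow> prec1 M F a b"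
  shows "prec1 M F j b"
proof -
  have "\<forall>a\<in>A. \<exists>P. P \<subseteq> mcar M \<times> F \<and> P \<noteq> {} \<and>
      (\<exists>ja. is_lub (mcar M) (mle M) (fst ` P) ja \<and> mle M a ja) \<and> (\<forall>(c, s)\<in>P. mle M (mact M s c) b)"
    using prec1_b unfolding prec1_def by blast
  then obtain PP where PP: "\<And>a. a \<in> A \<Longrightarrow> PP a \<subseteq> mcar M \<times> F \<and> PP a \<noteq> {} \<and>
      (\<exists>ja. is_lub (mcar M) (mle M) (fst ` PP a) ja \<and> mle M a ja) \<and>
      (\<forall>(c, s)\<in>PP a. mle M (mact M s c) b)"
    by metis
  define P where "P = (\<Union>a\<in>A. PP a)"
  have P: "P \<subseteq> mcar M \<times> F" "P \<noteq> {}" using PP A(2) unfolding P_def by auto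
  moreover have "fst ` P \<subseteq> mcar M" using P(1) by force
  ultimately obtain k where k: "is_lub (mcar M) (mle M) (fst ` P) k" using lub_exists by blast
  have "mle M a k" if a: "a \<in> A" for a
  proof -
    obtain ja where ja: "is_lub (mcar M) (mle M) (fst ` PP a) ja" "mle M a ja"
      using PP[OF a] by blast
    have "mle M ja k" using is_lub_subset_le[OF ja(1) k] a unfolding P_def by blast
    then show ?thesis
      using mle_trans[OF _ is_lub_in[OF ja(1)] is_lub_in[OF k] ja(2)] a A(1) by blast
  qed
  then have "mle M j k" using is_lub_least[OF j is_lub_in[OF k]] by blast
  moreover have "\<And>c s. (c, s) \<in> P \<Longrightarrow> mle M (mact M s c) b" using PP unfolding P_def by blast
  ultimately show ?thesis using prec1I[OF is_lub_in[OF j] b P k] by blast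
qed

lemma precn_join:
  assumes "A \<subseteq> mcar M" "A \<noteq> {}" "is_lub (mcar M) (mle M) A j"
  shows "b \<in> mcar M \<Longrightarrow> (\<And>a. a \<in> A \<Longrightarrow> precn M F (Suc n) a b) \<Longrightarrow> precn M F (Suc n) j b"
proof (induction n arbitrary: b)
  case 0
  then show ?case using prec1_join[OF assms] by (simp del: precn.simps add: precn_Suc_0)
next
  case (Suc n)
  have "\<exists>c. precn M F (Suc n) a c \<and> prec1 M F c b" if "a \<in> A" for a
    using Suc.prems(2)[OF that] by (simp only: precn.simps(2)[of M F "Suc n"])
  then obtain c where c: "\<And>a. a \<in> A \<Longrightarrow> precn M F (Suc n) a (c a) \<and> prec1 M F (c a) b"
    by metis
  have "c ` A \<subseteq> mcar M" using c by (auto dest: prec1_in)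
  moreover have "c ` A \<noteq> {}" using assms(2) by blast
  ultimately obtain k where k: "is_lub (mcar M) (mle M) (c ` A) k" using lub_exists by blast
  have "precn M F (Suc n) a k" if "a \<in> A" for a
    using c[OF that] prec1_mono_right[of _ "c a" k] is_lub_upper[OF k] is_lub_in[OF k] that by auto
  then have "precn M F (Suc n) j k" using Suc.IH is_lub_in[OF k] by blast
  moreover have "prec1 M F k b"
    using prec1_join[OF \<open>c ` A \<subseteq> mcar M\<close> \<open>c ` A \<noteq> {}\<close> k Suc.prems(1)] c by blast
  ultimately show ?case by auto
qed

lemma cls_self: "a \<in> mcar M \<Longrightarrow> a \<in> cls M F a"
  unfolding cls_def using prec_refl by blast

lemma cls_eq_iff:
  assumes "a \<in> mcar M" "b \<in> mcar M"
  shows "cls M F a = cls M F b \<longleftrightarrow> prec M F a b \<and> prec M F b a"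
proof
  assume "cls M F a = cls M F b"
  then have "b \<in> cls M F a" using cls_self[OF assms(2)] by simp
  then show "prec M F a b \<and> prec M F b a" unfolding cls_def by blast
next
  assume "prec M F a b \<and> prec M F b a"
  then show "cls M F a = cls M F b" unfolding cls_def by (auto intro: prec_trans)
qed

lemma loc_car: "mcar (loc M F) = cls M F ` mcar M"
  by (simp add: loc_def)

lemma loc_le_iff:
  assumes a: "a \<in> mcar M" and b: "b \<in> mcar M"
  shows "mle (loc M F) (cls M F a) (cls M F b) \<longleftrightarrow> prec M F a b"
proof
  assume "mle (loc M F) (cls M F a) (cls M F b)"
  then obtain a' b' where "a' \<in> mcar M" "b' \<in> mcar M" "cls M F a = cls M F a'"
    "cls M F b = cls M F b'" "prec M F a' b'" by (auto simp: loc_def)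
  then show "prec M F a b" using cls_eq_iff a b by (meson prec_trans)
qed (use a b in \<open>auto simp: loc_def\<close>)

lemma loc_act: "q \<in> qcar Q \<Longrightarrow> a \<in> mcar M \<Longrightarrow> mact (loc M F) q (cls M F a) = cls M F (mact M q a)"
proof -
  assume q: "q \<in> qcar Q" and a: "a \<in> mcar M"
  define a' where "a' = (SOME x. x \<in> cls M F a)"
  have "a' \<in> cls M F a" unfolding a'_def using cls_self[OF a] by (rule someI)
  then have "a' \<in> mcar M" "prec M F a a'" "prec M F a' a" unfolding cls_def by auto
  then have "cls M F (mact M q a') = cls M F (mact M q a)"
    using cls_eq_iff act_in prec_act q a by blast
  then show ?thesis unfolding loc_def a'_def by simp
qed

lemma loc_poset: "poset_on (mcar (loc M F)) (mle (loc M F))"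
  unfolding poset_on_def loc_car by (auto simp: loc_le_iff cls_eq_iff prec_refl elim: prec_trans)

lemma prec1_factor_act:
  assumes f: "f \<in> F" and g: "g \<in> qcar Q" and s: "s \<in> qcar Q" and fg_s: "qle Q (qmul Q f g) s"
    and c: "c \<in> mcar M" and y: "y \<in> mcar M" and sc_y: "mle M (mact M s c) y"
  shows "prec1 M F (mact M g c) y"
proof -
  have f': "f \<in> qcar Q" using f filter_subset by blast
  have fg: "qmul Q f g \<in> qcar Q" using qmul_in[OF f' g] .
  have "mle M (mact M (qmul Q f g) c) y"
    using mle_trans[OF act_in[OF fg c] act_in[OF s c] y] act_mono_left[OF c fg s fg_s] sc_y by blast
  then have "mle M (mact M f (mact M g c)) y" using act_mul[OF f' g c] by simp
  then show ?thesis
    using f act_in[OF g c] y is_lub_singleton[OF mposet] mle_refl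
    by (intro prec1I[of "mact M g c" M y "{(mact M g c, f)}" F "mact M g c"]) auto
qed

lemma loc_pairs_lift:
  assumes "P \<subseteq> mcar (loc M F) \<times> G"
  obtains P' where "P' \<subseteq> mcar M \<times> G" "P = (\<lambda>(a, s). (cls M F a, s)) ` P'"
proof
  show "{(a, s). a \<in> mcar M \<and> (cls M F a, s) \<in> P} \<subseteq> mcar M \<times> G" using assms by auto
  show "P = (\<lambda>(a, s). (cls M F a, s)) ` {(a, s). a \<in> mcar M \<and> (cls M F a, s) \<in> P}"
    using assms unfolding loc_car by force
qed

end

locale localizable_module = module_with_filter +
  assumes localizable: "localizable M F"
begin

lemma prec_join:
  assumes "A \<subseteq> mcar M" "A \<noteq> {}" "is_lub (mcar M) (mle M) A j" and b: "b \<in> mcar M"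
    and prec_b: "\<And>a. a \<in> A \<Longrightarrow> prec M F a b"
  shows "prec M F j b"
proof -
  obtain n where "\<forall>a\<in>mcar M. prec M F a b \<longrightarrow> precn M F (Suc n) a b"
    using localizable b unfolding localizable_def
    by (metis Suc_pred' less_eq_Suc_le Suc_le_eq One_nat_def)
  then have "precn M F (Suc n) j b" using precn_join[OF assms(1-3) b] prec_b assms(1) by blast
  moreover have "Suc n \<ge> 1" by simp
  ultimately show ?thesis unfolding prec_def by blast
qed

lemma loc_is_lub:
  assumes A: "A \<subseteq> mcar M" "A \<noteq> {}" and j: "is_lub (mcar M) (mle M) A j"
  shows "is_lub (mcar (loc M F)) (mle (loc M F)) (cls M F ` A) (cls M F j)"
proof -
  have j_in: "j \<in> mcar M" using is_lub_in[OF j] .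
  have "mle (loc M F) (cls M F j) (cls M F y)"
    if y: "y \<in> mcar M" and ub: "\<forall>X\<in>cls M F ` A. mle (loc M F) X (cls M F y)" for y
    using prec_join[OF A j y] ub A loc_le_iff[OF _ y] loc_le_iff[OF j_in y] by auto
  moreover have "mle (loc M F) (cls M F a) (cls M F j)" if "a \<in> A" for a
    using that A is_lub_upper[OF j that] loc_le_iff[OF _ j_in] prec_le[OF _ j_in] by auto
  ultimately show ?thesis unfolding is_lub_def loc_car using j_in by blast
qed

lemma loc_subset_lubE:
  assumes "S \<subseteq> mcar (loc M F)" "S \<noteq> {}"
  obtains A j where "A \<subseteq> mcar M" "A \<noteq> {}" "S = cls M F ` A" "is_lub (mcar M) (mle M) A j"
    "is_lub (mcar (loc M F)) (mle (loc M F)) S (cls M F j)"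
proof -
  define A where "A = {x \<in> mcar M. cls M F x \<in> S}"
  have S: "S = cls M F ` A" using assms(1) unfolding A_def loc_car by auto
  then have "A \<subseteq> mcar M" "A \<noteq> {}" using assms(2) unfolding A_def by auto
  with S show ?thesis using that lub_exists loc_is_lub by metis
qed

lemma loc_act_is_lub:
  assumes q: "q \<in> qcar Q" and S: "S \<subseteq> mcar (loc M F)" "S \<noteq> {}"
    and X: "is_lub (mcar (loc M F)) (mle (loc M F)) S X"
  shows "is_lub (mcar (loc M F)) (mle (loc M F)) (mact (loc M F) q ` S) (mact (loc M F) q X)"
proof -
  obtain A j where A: "A \<subseteq> mcar M" "A \<noteq> {}" and SA: "S = cls M F ` A"
    and j: "is_lub (mcar M) (mle M) A j"
    and Sj: "is_lub (mcar (loc M F)) (mle (loc M F)) S (cls M F j)"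
    using S by (rule loc_subset_lubE)
  have "X = cls M F j" using is_lub_unique[OF loc_poset X Sj] .
  moreover have "mact (loc M F) q ` S = cls M F ` mact M q ` A"
    unfolding SA image_image using loc_act q A by auto
  moreover have "mact M q ` A \<subseteq> mcar M" "mact M q ` A \<noteq> {}" using A act_in q by auto
  ultimately show ?thesis
    using loc_is_lub act_is_lub[OF q A j] loc_act[OF q is_lub_in[OF j]] by simp
qed

lemma loc_act_is_lub_left:
  assumes X: "X \<in> mcar (loc M F)" and S: "S \<subseteq> qcar Q" "S \<noteq> {}" "is_lub (qcar Q) (qle Q) S p"
  shows "is_lub (mcar (loc M F)) (mle (loc M F))
    ((\<lambda>q. mact (loc M F) q X) ` S) (mact (loc M F) p X)"
proof -
  obtain x where x: "x \<in> mcar M" "X = cls M F x" using X loc_car by auto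
  have "(\<lambda>q. mact (loc M F) q X) ` S = cls M F ` (\<lambda>q. mact M q x) ` S"
    unfolding image_image using loc_act x S by auto
  moreover have "(\<lambda>q. mact M q x) ` S \<subseteq> mcar M" "(\<lambda>q. mact M q x) ` S \<noteq> {}"
    using S act_in x by auto
  moreover have "p \<in> qcar Q" using is_lub_in[OF S(3)] .
  ultimately show ?thesis
    using loc_is_lub act_is_lub_left[OF x(1) S] loc_act x by simp
qed

lemma loc_module: "qmodule Q (loc M F)"
  unfolding qmodule_def
proof (intro conjI ballI allI impI)
  show "poset_on (mcar (loc M F)) (mle (loc M F))" by (rule loc_poset)
  show "\<exists>x. is_lub (mcar (loc M F)) (mle (loc M F)) S x" if "S \<subseteq> mcar (loc M F) \<and> S \<noteq> {}" for S
    using that by (blast elim: loc_subset_lubE)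
  show "mact (loc M F) q X \<in> mcar (loc M F)" if "q \<in> qcar Q" "X \<in> mcar (loc M F)" for q X
    using that loc_act act_in unfolding loc_car by auto
  show "mact (loc M F) (qmul Q p q) X = mact (loc M F) p (mact (loc M F) q X)"
    if "p \<in> qcar Q" "q \<in> qcar Q" "X \<in> mcar (loc M F)" for p q X
    using that loc_act act_in act_mul qmul_in unfolding loc_car by auto
  show "mact (loc M F) (qone Q) X = X" if "X \<in> mcar (loc M F)" for X
    using that loc_act act_one qone_in unfolding loc_car by auto
  show "is_lub (mcar (loc M F)) (mle (loc M F)) (mact (loc M F) q ` S) (mact (loc M F) q X)"
    if "q \<in> qcar Q" "S \<subseteq> mcar (loc M F) \<and> S \<noteq> {} \<and> is_lub (mcar (loc M F)) (mle (loc M F)) S X"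
    for q S X
    using that loc_act_is_lub by simp
  show "is_lub (mcar (loc M F)) (mle (loc M F)) ((\<lambda>q. mact (loc M F) q X) ` S) (mact (loc M F) p X)"
    if "X \<in> mcar (loc M F)" "S \<subseteq> qcar Q \<and> S \<noteq> {} \<and> is_lub (qcar Q) (qle Q) S p" for X S p
    using that loc_act_is_lub_left by simp
qed

lemma loc_prec1_if_prec1_prod:
  assumes G: "G \<subseteq> qcar Q" and "prec1 M (mfilter_prod Q F G) x y"
  shows "prec1 (loc M F) G (cls M F x) (cls M F y)"
  using assms(2)
proof (rule prec1E)
  fix P j
  assume x: "x \<in> mcar M" and y: "y \<in> mcar M" and P: "P \<subseteq> mcar M \<times> mfilter_prod Q F G" "P \<noteq> {}"
    and j: "is_lub (mcar M) (mle M) (fst ` P) j" and "mle M x j"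
    and below: "\<And>c s. (c, s) \<in> P \<Longrightarrow> mle M (mact M s c) y"
  have "\<forall>s\<in>mfilter_prod Q F G. \<exists>g. \<exists>f\<in>F. g \<in> G \<and> qle Q (qmul Q f g) s"
    unfolding mfilter_prod_def by blast
  then obtain g where g: "\<And>s. s \<in> mfilter_prod Q F G \<Longrightarrow> \<exists>f\<in>F. g s \<in> G \<and> qle Q (qmul Q f (g s)) s"
    by metis
  define P' where "P' = (\<lambda>(c, s). (cls M F c, g s)) ` P"
  have "fst ` P' = cls M F ` fst ` P" unfolding P'_def by force
  moreover have "fst ` P \<subseteq> mcar M" "fst ` P \<noteq> {}" using P by auto
  ultimately have "is_lub (mcar (loc M F)) (mle (loc M F)) (fst ` P') (cls M F j)"
    using loc_is_lub[OF _ _ j] by simp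
  moreover have "mle (loc M F) (cls M F x) (cls M F j)"
    using loc_le_iff prec_le x is_lub_in[OF j] \<open>mle M x j\<close> by simp
  moreover have "mle (loc M F) (mact (loc M F) t C) (cls M F y)" if Ct: "(C, t) \<in> P'" for C t
  proof -
    obtain c s where cs: "(c, s) \<in> P" and C: "C = cls M F c" and t: "t = g s"
      using Ct unfolding P'_def by force
    have c: "c \<in> mcar M" and s: "s \<in> mfilter_prod Q F G" using cs P by auto
    then obtain f where "f \<in> F" "g s \<in> G" "qle Q (qmul Q f (g s)) s" using g by blast
    moreover have "s \<in> qcar Q" using s unfolding mfilter_prod_def by blast
    ultimately have "prec1 M F (mact M (g s) c) y"
      using prec1_factor_act c y below[OF cs] G by blast
    moreover have gs: "g s \<in> qcar Q" using \<open>g s \<in> G\<close> G by blast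
    ultimately show ?thesis
      using loc_act[OF gs c] loc_le_iff[OF act_in[OF gs c] y] prec1_imp_prec C t by simp
  qed
  moreover have "P' \<subseteq> mcar (loc M F) \<times> G" "P' \<noteq> {}"
    using P g unfolding P'_def loc_car by auto
  ultimately show ?thesis
    using x y loc_car by (intro prec1I) auto
qed

lemma prec_if_loc_prec1:
  assumes H: "F \<union> G \<subseteq> H" and G: "G \<subseteq> qcar Q" and c: "c \<in> mcar M" and y: "y \<in> mcar M"
    and "prec1 (loc M F) G (cls M F c) (cls M F y)"
  shows "prec M H c y"
  using assms(5)
proof (rule prec1E)
  fix P J
  assume P: "P \<subseteq> mcar (loc M F) \<times> G" "P \<noteq> {}"
    and J: "is_lub (mcar (loc M F)) (mle (loc M F)) (fst ` P) J"
    and c_J: "mle (loc M F) (cls M F c) J"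
    and below: "\<And>C s. (C, s) \<in> P \<Longrightarrow> mle (loc M F) (mact (loc M F) s C) (cls M F y)"
  txt \<open>With j the join of the lifted family and k that of its translates,
    c <=_F j <=^1_H k <=_F y.\<close>
  obtain P' where P': "P' \<subseteq> mcar M \<times> G" and P_P': "P = (\<lambda>(a, s). (cls M F a, s)) ` P'"
    using loc_pairs_lift[OF P(1)] .
  have fst_P': "fst ` P' \<subseteq> mcar M" "fst ` P' \<noteq> {}" using P' P(2) P_P' by auto
  then obtain j where j: "is_lub (mcar M) (mle M) (fst ` P') j" using lub_exists by blast
  have "fst ` P = cls M F ` fst ` P'" unfolding P_P' image_image by (simp add: case_prod_beta)
  then have "J = cls M F j" using is_lub_unique[OF loc_poset J] loc_is_lub[OF fst_P' j] by simp
  then have "prec M F c j" using c_J loc_le_iff[OF c is_lub_in[OF j]] by simp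
  define B where "B = (\<lambda>(a, s). mact M s a) ` P'"
  have B: "B \<subseteq> mcar M" "B \<noteq> {}" using P' P(2) P_P' G act_in unfolding B_def by auto
  then obtain k where k: "is_lub (mcar M) (mle M) B k" using lub_exists by blast
  have "prec1 M H j k"
    using is_lub_in[OF j] is_lub_in[OF k] P' H P(2) P_P' j mle_refl is_lub_upper[OF k]
    unfolding B_def by (intro prec1I[of j M k P' H j]) auto
  moreover have "prec M F b y" if b_B: "b \<in> B" for b
  proof -
    obtain a s where as: "(a, s) \<in> P'" and b: "b = mact M s a" using b_B unfolding B_def by auto
    have a: "a \<in> mcar M" and s: "s \<in> qcar Q" using as P' G by auto
    have "(cls M F a, s) \<in> P" using as unfolding P_P' by force
    then have "mle (loc M F) (mact (loc M F) s (cls M F a)) (cls M F y)" by (rule below)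
    then show ?thesis using loc_act[OF s a] loc_le_iff[OF act_in[OF s a] y] b by simp
  qed
  then have "prec M F k y" using prec_join[OF B k y] by blast
  moreover have "F \<subseteq> H" using H by blast
  ultimately show ?thesis
    using prec_filter_mono prec1_imp_prec prec_trans \<open>prec M F c j\<close> by metis
qed

end

definition reloc_map :: "('q, 'm) qmod \<Rightarrow> 'q set \<Rightarrow> 'q set \<Rightarrow> 'm set \<Rightarrow> 'm set set" where
  "reloc_map M F G Z = cls (loc M F) G (cls M F (SOME z. z \<in> Z))"

locale two_filters = localizable_module +
  fixes G :: "'q set"
  assumes filter_G: "mfilter Q G"
begin

abbreviation FG :: "'q set" where "FG \<equiv> mfilter_sum Q F G"

sublocale sum: module_with_filter Q M FG
  using mfilter_prod_mfilter[OF filter filter_G]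
  by unfold_locales (simp_all add: module mfilter_sum_eq_prod[OF filter filter_G])

sublocale quot: module_with_filter Q "loc M F" G
  by unfold_locales (simp_all add: loc_module filter_G)

lemma loc_precn_if_precn:
  "precn M FG n x y \<Longrightarrow> precn (loc M F) G n (cls M F x) (cls M F y)"
proof (induction n arbitrary: y)
  case 0
  then show ?case using loc_car by auto
next
  case (Suc n)
  then obtain c where "precn M FG n x c" "prec1 M FG c y" by auto
  then show ?case
    using Suc.IH loc_prec1_if_prec1_prod[OF quot.filter_subset]
    by (auto simp: mfilter_sum_eq_prod[OF filter filter_G])
qed

lemma prec_if_loc_precn:
  "x \<in> mcar M \<Longrightarrow> y \<in> mcar M \<Longrightarrow> precn (loc M F) G n (cls M F x) (cls M F y) \<Longrightarrow>
    prec M FG x y"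
proof (induction n arbitrary: y)
  case 0
  then have "prec M F x y" using cls_eq_iff by simp
  moreover have "F \<subseteq> FG" using Un_subset_mfilter_sum[of F G Q] by simp
  ultimately show ?case by (rule prec_filter_mono[rotated])
next
  case (Suc n)
  then obtain C where C: "precn (loc M F) G n (cls M F x) C" "prec1 (loc M F) G C (cls M F y)"
    by auto
  then obtain c where c: "c \<in> mcar M" "C = cls M F c" using prec1_in loc_car by (metis imageE)
  then have "prec M FG c y"
    using prec_if_loc_prec1[OF Un_subset_mfilter_sum quot.filter_subset c(1) Suc.prems(2)] C(2)
    by simp
  moreover have "prec M FG x c" using Suc.IH[OF Suc.prems(1) c(1)] C(1) c(2) by simp
  ultimately show ?case using prec_trans by metis
qed

lemma prec_sum_iff_loc_prec:
  assumes "x \<in> mcar M" "y \<in> mcar M"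
  shows "prec M FG x y \<longleftrightarrow> prec (loc M F) G (cls M F x) (cls M F y)"
  using loc_precn_if_precn prec_if_loc_precn[OF assms] unfolding prec_def by meson

lemma localizable_loc:
  assumes "localizable M FG"
  shows "localizable (loc M F) G"
  unfolding localizable_def
proof
  fix Y assume "Y \<in> mcar (loc M F)"
  then obtain y where y: "y \<in> mcar M" "Y = cls M F y" using loc_car by auto
  obtain n where "n \<ge> 1" and n: "\<And>x. x \<in> mcar M \<Longrightarrow> prec M FG x y \<Longrightarrow> precn M FG n x y"
    using assms y(1) unfolding localizable_def by blast
  moreover have "precn (loc M F) G n X Y" if "X \<in> mcar (loc M F)" "prec (loc M F) G X Y" for X
    using that n loc_precn_if_precn prec_sum_iff_loc_prec y unfolding loc_car by auto
  ultimately show "\<exists>n\<ge>1. \<forall>X\<in>mcar (loc M F). prec (loc M F) G X Y \<longrightarrow> precn (loc M F) G n X Y"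
    by blast
qed

lemma reloc_map_cls:
  assumes x: "x \<in> mcar M"
  shows "reloc_map M F G (cls M FG x) = cls (loc M F) G (cls M F x)"
proof -
  define z where "z = (SOME z. z \<in> cls M FG x)"
  have "z \<in> cls M FG x" unfolding z_def using sum.cls_self[OF x] by (rule someI)
  then have "z \<in> mcar M" "prec M FG x z" "prec M FG z x" unfolding cls_def by auto
  then have "cls (loc M F) G (cls M F z) = cls (loc M F) G (cls M F x)"
    using quot.cls_eq_iff prec_sum_iff_loc_prec x loc_car by auto
  then show ?thesis unfolding reloc_map_def z_def .
qed

lemma reloc_map_iso:
  "module_iso Q (loc M FG) (loc (loc M F) G) (reloc_map M F G)"
proof (rule module_iso_if_order_iso)
  have le_iff: "mle (loc (loc M F) G) (reloc_map M F G (cls M FG x))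
      (reloc_map M F G (cls M FG y)) \<longleftrightarrow> prec M FG x y"
    if "x \<in> mcar M" "y \<in> mcar M" for x y
    using that reloc_map_cls quot.loc_le_iff prec_sum_iff_loc_prec loc_car by auto
  then show "mle (loc (loc M F) G) (reloc_map M F G X) (reloc_map M F G Y) \<longleftrightarrow> mle (loc M FG) X Y"
    if "X \<in> mcar (loc M FG)" "Y \<in> mcar (loc M FG)" for X Y
    using that sum.loc_le_iff unfolding sum.loc_car by auto
  have "inj_on (reloc_map M F G) (mcar (loc M FG))"
  proof (rule inj_onI)
    fix X Y
    assume "X \<in> mcar (loc M FG)" "Y \<in> mcar (loc M FG)"
      and eq: "reloc_map M F G X = reloc_map M F G Y"
    then obtain x y where x: "x \<in> mcar M" "X = cls M FG x"
      and y: "y \<in> mcar M" "Y = cls M FG y" unfolding sum.loc_car by blast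
    have "cls (loc M F) G (cls M F x) = cls (loc M F) G (cls M F y)"
      using eq reloc_map_cls x y by simp
    then show "X = Y"
      using quot.cls_eq_iff sum.cls_eq_iff prec_sum_iff_loc_prec x y loc_car by auto
  qed
  moreover have "reloc_map M F G ` mcar (loc M FG) = mcar (loc (loc M F) G)"
    unfolding sum.loc_car quot.loc_car loc_car image_image using reloc_map_cls by simp
  ultimately show "bij_betw (reloc_map M F G) (mcar (loc M FG)) (mcar (loc (loc M F) G))"
    unfolding bij_betw_def by blast
  show "mact (loc M FG) q X \<in> mcar (loc M FG)"
    if "q \<in> qcar Q" "X \<in> mcar (loc M FG)" for q X
    using that sum.loc_act act_in unfolding sum.loc_car by auto
  show "reloc_map M F G (mact (loc M FG) q X) = mact (loc (loc M F) G) q (reloc_map M F G X)"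
    if "q \<in> qcar Q" "X \<in> mcar (loc M FG)" for q X
    using that sum.loc_act act_in reloc_map_cls loc_act quot.loc_act loc_car
    unfolding sum.loc_car by auto
qed

end

theorem mainTheorem2:
  fixes Q :: "'q quantale_str" and M :: "('q, 'm) qmod" and F G :: "'q set"
  assumes "quantale Q"
    and "qmodule Q M"
    and "F \<in> mF Q" and "G \<in> mF Q"
    and "localizable M F"
    and "localizable M (mfilter_sum Q F G)"
  shows "qmodule Q (loc M F) \<and> localizable (loc M F) G \<and>
    (\<exists>\<phi>. (\<forall>x\<in>mcar M. \<phi> (cls M (mfilter_sum Q F G) x) = cls (loc M F) G (cls M F x)) \<and>
         module_iso Q (loc M (mfilter_sum Q F G)) (loc (loc M F) G) \<phi>)"
proof -
  interpret two_filters Q M F G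
    using assms by unfold_locales (simp_all add: mF_def)
  show ?thesis
    using loc_module localizable_loc[OF assms(6)] reloc_map_cls reloc_map_iso by blast
qed

end
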